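(* Let $\mathcal G$ be a finite connected groupoid and $\alpha=(S_g,\alpha_g)_{g\in\mathcal G}$ a unital group-type partial action of $\mathcal G$ on a ring $S=\bigoplus_{y\in\mathcal G_0}S_y$, with $S_g=S1_g$ and $1_g\neq0$ for all $g$. Let $\mathcal H\in\mathrm{wSub}_\alpha(\mathcal G)$, with connected components $\mathcal H_1,\dots,\mathcal H_r$ having object sets $Y_1,\dots,Y_r$, choose $y_j\in Y_j$, and let $T=S^{\alpha_{\mathcal H}}$ and $T_{y_j}=S_{y_j}^{\alpha_{\mathcal H_j(y_j)}}$. Then: (i) $\mathcal G_T$ is a wide subgroupoid of $\mathcal G$ if and only if $\mathcal G(y_j)_{T_{y_j}}$ is a subgroup of $\mathcal G(y_j)$ for all $1\le j\le r$; (ii) $\mathcal G_T=\mathcal H$ if and only if $\mathcal G(y_j)_{T_{y_j}}=\mathcal H_j(y_j)$ for all $1\le j\le r$.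
   Context: A groupoid is a small category with all morphisms invertible; $\mathcal G_0$ is its object set (identified with identity morphisms), $s(g),t(g)$ source and target, $\mathcal G(x,y)=\{g:s(g)=x,t(g)=y\}$, $\mathcal G(x)=\mathcal G(x,x)$; $gh$ defined iff $s(g)=t(h)$; connected means all $\mathcal G(x,y)\ne\emptyset$; connected components are full subgroupoids on classes of $x\sim y\iff\mathcal G(x,y)\neq\emptyset$; a subgroupoid is wide if it contains all of $\mathcal G_0$. A partial action $\alpha=(S_g,\alpha_g)_{g\in\mathcal G}$ on a ring $S$: for each $g$, $S_{t(g)}$ is an ideal of $S$, $S_g$ an ideal of $S_{t(g)}$, $\alpha_g:S_{g^{-1}}\to S_g$ a ring isomorphism; $\alpha_x=\mathrm{id}_{S_x}$; for composable $(g,h)$, $\alpha_h^{-1}(S_{g^{-1}}\cap S_h)\subseteq S_{(gh)^{-1}}$ and $\alpha_g\alpha_h(a)=\alpha_{gh}(a)$ there. Unital: $S_g=S1_g$, $1_g$ central idempotent. A transversal for $x$ in a connected groupoid $\mathcal K$ is $\{\tau_y\}_{y\in\mathcal K_0}$ with $\tau_y\in\mathcal K(x,y)$, $\tau_x=x$; a partial action of connected $\mathcal K$ on $A=\bigoplus_{y\in\mathcal K_0}A_y$ is group-type if some $x$ and transversal satisfy $A_{\tau_y^{-1}}=A_x$, $A_{\tau_y}=A_y$ for all $y$; for non-connected $\mathcal K$ it is group-type if each restriction to a connected component $\mathcal K_Y$ (acting on $\bigoplus_{y\in Y}A_y$) is group-type. For a subgroupoid $\mathcal H$, $\alpha_{\mathcal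 H}=(S_h,\alpha_h)_{h\in\mathcal H}$ acts on $\bigoplus_{z\in\mathcal H_0}S_z$. $\mathrm{wSub}_\alpha(\mathcal G)$ is the set of wide subgroupoids $\mathcal H$ with $\alpha_{\mathcal H}$ group-type. For a subgroupoid $\mathcal K$ and subring $A\subseteq S$, $A^{\alpha_{\mathcal K}}=\{a\in A:\alpha_k(a1_{k^{-1}})=a1_k\ \forall k\in\mathcal K\}$. For a subring $T\subseteq S$, $\mathcal G_T=\{g\in\mathcal G:\alpha_g(t1_{g^{-1}})=t1_g\ \forall t\in T\}$; for $y\in\mathcal G_0$ and a subring $B\subseteq S_y$, $\mathcal G(y)_B=\{l\in\mathcal G(y):\alpha_l(b1_{l^{-1}})=b1_l\ \forall b\in B\}$. *)

theory Defs
  imports Main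
begin

section \<open>Groupoids (objects identified with identity morphisms)\<close>

record 'g groupoid =
  mor  :: "'g set"
  src  :: "'g \<Rightarrow> 'g"
  tgt  :: "'g \<Rightarrow> 'g"
  comp :: "'g \<Rightarrow> 'g \<Rightarrow> 'g"   \<comment> \<open>comp g h = gh, meaningful when src g = tgt h\<close>
  ginv :: "'g \<Rightarrow> 'g"

definition objs :: "('g, 'b) groupoid_scheme \<Rightarrow> 'g set" where
  "objs G = src G ` mor G"

definition is_groupoid :: "('g, 'b) groupoid_scheme \<Rightarrow> bool" where
  "is_groupoid G \<longleftrightarrow>
     (\<forall>g\<in>mor G. src G g \<in> mor G \<and> tgt G g \<in> mor G \<and> ginv G g \<in> mor G) \<and>
     (\<forall>x\<in>objs G. src G x = x \<and> tgt G x = x) \<and>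
     (\<forall>g\<in>mor G. src G (tgt G g) = tgt G g) \<and>
     (\<forall>g\<in>mor G. \<forall>h\<in>mor G. src G g = tgt G h \<longrightarrow>
        comp G g h \<in> mor G \<and> src G (comp G g h) = src G h \<and> tgt G (comp G g h) = tgt G g) \<and>
     (\<forall>f\<in>mor G. \<forall>g\<in>mor G. \<forall>h\<in>mor G. src G f = tgt G g \<and> src G g = tgt G h \<longrightarrow>
        comp G (comp G f g) h = comp G f (comp G g h)) \<and>
     (\<forall>g\<in>mor G. comp G (tgt G g) g = g \<and> comp G g (src G g) = g) \<and>
     (\<forall>g\<in>mor G. src G (ginv G g) = tgt G g \<and> tgt G (ginv G g) = src G g \<and>
        comp G g (ginv G g) = tgt G g \<and> comp G (ginv G g) g = src G g)"

definition hom :: "('g, 'b) groupoid_scheme \<Rightarrow> 'g \<Rightarrow> 'g \<Rightarrow> 'g set" where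
  "hom G x y = {g \<in> mor G. src G g = x \<and> tgt G g = y}"

definition connected_groupoid :: "('g, 'b) groupoid_scheme \<Rightarrow> bool" where
  "connected_groupoid G \<longleftrightarrow> (\<forall>x\<in>objs G. \<forall>y\<in>objs G. hom G x y \<noteq> {})"

text \<open>Subgroupoids are represented as subsets of the morphism set, with the inherited operations.\<close>

definition subgroupoid :: "('g, 'b) groupoid_scheme \<Rightarrow> 'g set \<Rightarrow> bool" where
  "subgroupoid G H \<longleftrightarrow> H \<subseteq> mor G \<and>
     (\<forall>h\<in>H. src G h \<in> H \<and> tgt G h \<in> H \<and> ginv G h \<in> H) \<and>
     (\<forall>h\<in>H. \<forall>k\<in>H. src G h = tgt G k \<longrightarrow> comp G h k \<in> H)"

definition wide :: "('g, 'b) groupoid_scheme \<Rightarrow> 'g set \<Rightarrow> bool" where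
  "wide G H \<longleftrightarrow> objs G \<subseteq> H"

definition loc_group :: "('g, 'b) groupoid_scheme \<Rightarrow> 'g set \<Rightarrow> 'g \<Rightarrow> 'g set" where
  "loc_group G H y = {h \<in> H. src G h = y \<and> tgt G h = y}"

text \<open>Object sets of the connected components of a subgroupoid H.\<close>
definition components :: "('g, 'b) groupoid_scheme \<Rightarrow> 'g set \<Rightarrow> 'g set set" where
  "components G H = {{y \<in> src G ` H. \<exists>h\<in>H. src G h = x \<and> tgt G h = y} | x. x \<in> src G ` H}"

definition subgroup_at :: "('g, 'b) groupoid_scheme \<Rightarrow> 'g \<Rightarrow> 'g set \<Rightarrow> bool" where
  "subgroup_at G y K \<longleftrightarrow> K \<subseteq> loc_group G (mor G) y \<and> y \<in> K \<and>
     (\<forall>h\<in>K. \<forall>k\<in>K. comp G h k \<in> K) \<and> (\<forall>h\<in>K. ginv G h \<in> K)"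

definition is_ideal :: "'a::ring set \<Rightarrow> 'a set \<Rightarrow> bool" where
  "is_ideal I A \<longleftrightarrow> I \<subseteq> A \<and> 0 \<in> I \<and> (\<forall>a\<in>I. \<forall>b\<in>I. a + b \<in> I) \<and> (\<forall>a\<in>I. - a \<in> I) \<and>
     (\<forall>r\<in>A. \<forall>a\<in>I. r * a \<in> I \<and> a * r \<in> I)"

definition ring_iso :: "('a::ring \<Rightarrow> 'a) \<Rightarrow> 'a set \<Rightarrow> 'a set \<Rightarrow> bool" where
  "ring_iso f A B \<longleftrightarrow> bij_betw f A B \<and>
     (\<forall>a\<in>A. \<forall>b\<in>A. f (a + b) = f a + f b \<and> f (a * b) = f a * f b)"

text \<open>The ring S is the whole type 'a; S = direct sum of the S_y, y an object.\<close>
definition internal_direct_sum :: "'g set \<Rightarrow> ('g \<Rightarrow> 'a::ring set) \<Rightarrow> bool" where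
  "internal_direct_sum Y Sg \<longleftrightarrow>
     (\<forall>a::'a. \<exists>!f. (\<forall>y. y \<notin> Y \<longrightarrow> f y = 0) \<and> (\<forall>y\<in>Y. f y \<in> Sg y) \<and> a = (\<Sum>y\<in>Y. f y))"

definition partial_action ::
  "('g, 'b) groupoid_scheme \<Rightarrow> ('g \<Rightarrow> 'a::ring set) \<Rightarrow> ('g \<Rightarrow> 'a \<Rightarrow> 'a) \<Rightarrow> bool" where
  "partial_action G Sg al \<longleftrightarrow>
     (\<forall>g\<in>mor G. is_ideal (Sg (tgt G g)) UNIV \<and> is_ideal (Sg g) (Sg (tgt G g)) \<and>
        ring_iso (al g) (Sg (ginv G g)) (Sg g)) \<and>
     (\<forall>x\<in>objs G. \<forall>a\<in>Sg x. al x a = a) \<and>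
     (\<forall>g\<in>mor G. \<forall>h\<in>mor G. src G g = tgt G h \<longrightarrow>
        (\<forall>a\<in>Sg (ginv G h). al h a \<in> Sg (ginv G g) \<inter> Sg h \<longrightarrow>
           a \<in> Sg (ginv G (comp G g h)) \<and> al g (al h a) = al (comp G g h) a))"

definition unital_pa ::
  "('g, 'b) groupoid_scheme \<Rightarrow> ('g \<Rightarrow> 'a::ring set) \<Rightarrow> ('g \<Rightarrow> 'a) \<Rightarrow> bool" where
  "unital_pa G Sg one \<longleftrightarrow>
     (\<forall>g\<in>mor G. Sg g = {a * one g | a. True} \<and> one g * one g = one g \<and>
        (\<forall>a. a * one g = one g * a))"

definition group_type_on ::
  "('g, 'b) groupoid_scheme \<Rightarrow> 'g set \<Rightarrow> ('g \<Rightarrow> 'a set) \<Rightarrow> 'g set \<Rightarrow> bool" where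
  "group_type_on G H Sg Y \<longleftrightarrow> (\<exists>x\<in>Y. \<exists>\<tau>. \<tau> x = x \<and>
     (\<forall>y\<in>Y. \<tau> y \<in> H \<and> src G (\<tau> y) = x \<and> tgt G (\<tau> y) = y \<and>
        Sg (ginv G (\<tau> y)) = Sg x \<and> Sg (\<tau> y) = Sg y))"

definition group_type :: "('g, 'b) groupoid_scheme \<Rightarrow> 'g set \<Rightarrow> ('g \<Rightarrow> 'a set) \<Rightarrow> bool" where
  "group_type G H Sg \<longleftrightarrow> (\<forall>Y\<in>components G H. group_type_on G H Sg Y)"

definition wSub :: "('g, 'b) groupoid_scheme \<Rightarrow> ('g \<Rightarrow> 'a set) \<Rightarrow> 'g set set" where
  "wSub G Sg = {H. subgroupoid G H \<and> wide G H \<and> group_type G H Sg}"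

definition fixed_ring ::
  "('g, 'b) groupoid_scheme \<Rightarrow> ('g \<Rightarrow> 'a::ring \<Rightarrow> 'a) \<Rightarrow> ('g \<Rightarrow> 'a) \<Rightarrow> 'g set \<Rightarrow> 'a set \<Rightarrow> 'a set" where
  "fixed_ring G al one K A = {a \<in> A. \<forall>k\<in>K. al k (a * one (ginv G k)) = a * one k}"

text \<open>G_T = stab (mor G) T, and G(y)_B = stab (G(y)) B.\<close>
definition stab ::
  "('g, 'b) groupoid_scheme \<Rightarrow> ('g \<Rightarrow> 'a::ring \<Rightarrow> 'a) \<Rightarrow> ('g \<Rightarrow> 'a) \<Rightarrow> 'g set \<Rightarrow> 'a set \<Rightarrow> 'g set" where
  "stab G al one K B = {k \<in> K. \<forall>b\<in>B. al k (b * one (ginv G k)) = b * one k}"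

end

theory Submission
  imports Defs
begin

text \<open>Call a morphism s full if S_{s^{-1}} = S_{src s} and S_s = S_{tgt s}. Composing with a full
  morphism transports the fixed-point condition along alpha_s, so G_T is stable under
  composition with full morphisms of H on either side, and the group-type hypothesis supplies
  full morphisms of H between any two objects of an H-component. Since the central idempotent
  1_Y = \<Sum>_{y \<in> Y} 1_y of a component lies in T and 1_g \<noteq> 0, morphisms of G_T never leave an
  H-component. Hence every g \<in> G_T is conjugate by full morphisms of H to a loop of G_T at y_j,
  and both (i) and (ii) reduce to the isotropy groups at the y_j. There G_T(y_j) = G(y_j)_{T_{y_j}},
  because every b \<in> T_{y_j} extends to the element \<Sum>_y alpha_{sigma_y}(b) of T, where the sigma_y
  are full morphisms of H from y_j to the objects y of its component.\<close>

section \<open>Groupoids and wide subgroupoids\<close>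

locale small_groupoid =
  fixes G :: "('g, 'b) groupoid_scheme"
  assumes is_groupoid: "is_groupoid G"
begin

lemma src_in_mor [simp]: "g \<in> mor G \<Longrightarrow> src G g \<in> mor G"
  and tgt_in_mor [simp]: "g \<in> mor G \<Longrightarrow> tgt G g \<in> mor G"
  and ginv_in_mor [simp]: "g \<in> mor G \<Longrightarrow> ginv G g \<in> mor G"
  and src_obj [simp]: "x \<in> objs G \<Longrightarrow> src G x = x"
  and tgt_obj [simp]: "x \<in> objs G \<Longrightarrow> tgt G x = x"
  and src_tgt [simp]: "g \<in> mor G \<Longrightarrow> src G (tgt G g) = tgt G g"
  and comp_in_mor [simp]: "g \<in> mor G \<Longrightarrow> h \<in> mor G \<Longrightarrow> src G g = tgt G h \<Longrightarrow> comp G g h \<in> mor G"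
  and src_comp [simp]: "g \<in> mor G \<Longrightarrow> h \<in> mor G \<Longrightarrow> src G g = tgt G h \<Longrightarrow> src G (comp G g h) = src G h"
  and tgt_comp [simp]: "g \<in> mor G \<Longrightarrow> h \<in> mor G \<Longrightarrow> src G g = tgt G h \<Longrightarrow> tgt G (comp G g h) = tgt G g"
  and comp_assoc [simp]: "f \<in> mor G \<Longrightarrow> g \<in> mor G \<Longrightarrow> h \<in> mor G \<Longrightarrow> src G f = tgt G g \<Longrightarrow>
      src G g = tgt G h \<Longrightarrow> comp G (comp G f g) h = comp G f (comp G g h)"
  and comp_tgt [simp]: "g \<in> mor G \<Longrightarrow> comp G (tgt G g) g = g"
  and comp_src [simp]: "g \<in> mor G \<Longrightarrow> comp G g (src G g) = g"
  and src_ginv [simp]: "g \<in> mor G \<Longrightarrow> src G (ginv G g) = tgt G g"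
  and tgt_ginv [simp]: "g \<in> mor G \<Longrightarrow> tgt G (ginv G g) = src G g"
  and comp_ginv_right [simp]: "g \<in> mor G \<Longrightarrow> comp G g (ginv G g) = tgt G g"
  and comp_ginv_left [simp]: "g \<in> mor G \<Longrightarrow> comp G (ginv G g) g = src G g"
  using is_groupoid unfolding is_groupoid_def by blast+

lemma src_in_objs [simp]: "g \<in> mor G \<Longrightarrow> src G g \<in> objs G"
  unfolding objs_def by blast

lemma tgt_in_objs [simp]: "g \<in> mor G \<Longrightarrow> tgt G g \<in> objs G"
  unfolding objs_def by (metis image_eqI src_tgt tgt_in_mor)

lemma objs_in_mor: "x \<in> objs G \<Longrightarrow> x \<in> mor G"
  unfolding objs_def by auto

lemma comp_cancel_left [simp]:
  assumes "s \<in> mor G" "x \<in> mor G" "tgt G x = tgt G s"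
  shows "comp G s (comp G (ginv G s) x) = x"
proof -
  have "comp G s (comp G (ginv G s) x) = comp G (comp G s (ginv G s)) x"
    using assms by (simp del: comp_assoc add: comp_assoc[symmetric])
  then show ?thesis
    using assms by (metis comp_ginv_right comp_tgt)
qed

lemma comp_ginv_cancel_left [simp]:
  assumes "s \<in> mor G" "x \<in> mor G" "tgt G x = src G s"
  shows "comp G (ginv G s) (comp G s x) = x"
proof -
  have "comp G (ginv G s) (comp G s x) = comp G (comp G (ginv G s) s) x"
    using assms by (simp del: comp_assoc add: comp_assoc[symmetric])
  then show ?thesis
    using assms by (metis comp_ginv_left comp_tgt)
qed

lemma ginv_unique:
  assumes "g \<in> mor G" "k \<in> mor G" "src G k = tgt G g" "comp G k g = src G g"
  shows "k = ginv G g"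
proof -
  have "k = comp G k (comp G g (ginv G g))"
    using assms by (metis comp_ginv_right comp_src)
  also have "\<dots> = comp G (src G g) (ginv G g)"
    using assms comp_assoc[of k g "ginv G g"] by (simp del: comp_assoc comp_ginv_right)
  also have "\<dots> = ginv G g"
    using assms by (metis comp_tgt ginv_in_mor tgt_ginv)
  finally show ?thesis .
qed

lemma ginv_ginv [simp]: "g \<in> mor G \<Longrightarrow> ginv G (ginv G g) = g"
  by (rule ginv_unique[symmetric]) auto

lemma ginv_obj [simp]: "x \<in> objs G \<Longrightarrow> ginv G x = x"
  using ginv_unique[of x x] comp_src[of x] objs_in_mor[of x] by simp

lemma ginv_comp:
  assumes "g \<in> mor G" "h \<in> mor G" "src G g = tgt G h"
  shows "ginv G (comp G g h) = comp G (ginv G h) (ginv G g)"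
  using assms by (intro ginv_unique[symmetric]) auto

lemma conj_comp:
  assumes "f \<in> mor G" "g \<in> mor G" "src G f = tgt G g"
    and "a \<in> mor G" "b \<in> mor G" "c \<in> mor G"
    and "tgt G a = src G g" "tgt G b = tgt G g" "tgt G c = tgt G f"
  shows "comp G (comp G (ginv G c) (comp G f b)) (comp G (ginv G b) (comp G g a))
       = comp G (ginv G c) (comp G (comp G f g) a)"
  using assms by simp

lemma conj_cancel:
  assumes "g \<in> mor G" "a \<in> mor G" "b \<in> mor G" "tgt G a = src G g" "tgt G b = tgt G g"
  shows "comp G b (comp G (comp G (ginv G b) (comp G g a)) (ginv G a)) = g"
  using assms by simp

lemma subgroup_at_loc_group:
  assumes "subgroupoid G K" "r \<in> objs G" "r \<in> K"
  shows "subgroup_at G r (loc_group G K r)"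
  using assms unfolding subgroup_at_def subgroupoid_def loc_group_def by (auto simp: subset_iff)

end

locale wide_subgroupoid = small_groupoid +
  fixes H :: "'g set"
  assumes subgroupoid: "subgroupoid G H" and wide: "wide G H"
begin

lemma H_in_mor: "h \<in> H \<Longrightarrow> h \<in> mor G"
  and ginv_in_H: "h \<in> H \<Longrightarrow> ginv G h \<in> H"
  and comp_in_H: "h \<in> H \<Longrightarrow> k \<in> H \<Longrightarrow> src G h = tgt G k \<Longrightarrow> comp G h k \<in> H"
  using subgroupoid unfolding subgroupoid_def by blast+

lemma objs_in_H: "x \<in> objs G \<Longrightarrow> x \<in> H"
  using wide unfolding wide_def by blast

lemma src_image_H: "src G ` H = objs G"
proof
  show "src G ` H \<subseteq> objs G"
    using H_in_mor by auto
  show "objs G \<subseteq> src G ` H"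
  proof
    fix x assume "x \<in> objs G"
    then have "x = src G x" "x \<in> H"
      using objs_in_H by auto
    then show "x \<in> src G ` H" by blast
  qed
qed

lemma components_subset_objs: "Y \<in> components G H \<Longrightarrow> Y \<subseteq> objs G"
  unfolding components_def src_image_H by auto

lemma ex_component:
  assumes "x \<in> objs G"
  shows "\<exists>Y\<in>components G H. x \<in> Y"
proof
  let ?Y = "{y \<in> objs G. \<exists>h\<in>H. src G h = x \<and> tgt G h = y}"
  show "?Y \<in> components G H"
    unfolding components_def src_image_H using assms by blast
  show "x \<in> ?Y"
    using assms objs_in_H by (auto intro!: bexI[of _ x])
qed

lemma mem_component_iff:
  assumes "Y \<in> components G H" "y \<in> Y" "z \<in> objs G"
  shows "z \<in> Y \<longleftrightarrow> (\<exists>h\<in>H. src G h = y \<and> tgt G h = z)"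
proof -
  obtain x where Y: "Y = {z \<in> objs G. \<exists>h\<in>H. src G h = x \<and> tgt G h = z}"
    using assms(1) unfolding components_def src_image_H by blast
  then obtain h0 where h0: "h0 \<in> H" "src G h0 = x" "tgt G h0 = y"
    using assms(2) by blast
  show ?thesis
  proof
    assume "z \<in> Y"
    then obtain h where "h \<in> H" "src G h = x" "tgt G h = z"
      using Y by blast
    then show "\<exists>h\<in>H. src G h = y \<and> tgt G h = z"
      using h0 by (auto simp: H_in_mor ginv_in_H comp_in_H intro!: bexI[of _ "comp G h (ginv G h0)"])
  next
    assume "\<exists>h\<in>H. src G h = y \<and> tgt G h = z"
    then obtain h where "h \<in> H" "src G h = y" "tgt G h = z"
      by blast
    then show "z \<in> Y"
      using h0 Y assms(3) by (auto simp: H_in_mor comp_in_H intro!: bexI[of _ "comp G h h0"])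
  qed
qed

lemma component_src_iff_tgt:
  assumes "Y \<in> components G H" "h \<in> H"
  shows "src G h \<in> Y \<longleftrightarrow> tgt G h \<in> Y"
proof -
  have h: "h \<in> mor G" "ginv G h \<in> H"
    using assms(2) by (auto simp: H_in_mor ginv_in_H)
  show ?thesis
    using mem_component_iff[OF assms(1), of "src G h" "tgt G h"]
      mem_component_iff[OF assms(1), of "tgt G h" "src G h"] assms(2) h
    by force
qed

end

section \<open>Unital partial actions\<close>

locale unital_partial_action = small_groupoid G
  for G :: "('g, 'b) groupoid_scheme" +
  fixes Sg :: "'g \<Rightarrow> 'a::ring set" and al :: "'g \<Rightarrow> 'a \<Rightarrow> 'a" and one :: "'g \<Rightarrow> 'a"
  assumes partial_action: "partial_action G Sg al" and unital: "unital_pa G Sg one"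
begin

lemma Sg_eq: "g \<in> mor G \<Longrightarrow> Sg g = {a * one g | a. True}"
  and one_idem: "g \<in> mor G \<Longrightarrow> one g * one g = one g"
  and one_central: "g \<in> mor G \<Longrightarrow> a * one g = one g * a"
  using unital unfolding unital_pa_def by blast+

lemma mult_one_in_Sg [simp]: "g \<in> mor G \<Longrightarrow> a * one g \<in> Sg g"
  using Sg_eq by blast

lemma one_in_Sg [simp]: "g \<in> mor G \<Longrightarrow> one g \<in> Sg g"
  using mult_one_in_Sg[of g "one g"] one_idem by simp

lemma mult_one_Sg: "g \<in> mor G \<Longrightarrow> x \<in> Sg g \<Longrightarrow> x * one g = x"
  using Sg_eq one_idem by (force simp: mult.assoc)

lemma one_mult_Sg: "g \<in> mor G \<Longrightarrow> x \<in> Sg g \<Longrightarrow> one g * x = x"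
  using mult_one_Sg[of g x] one_central[of g x] by simp

lemma right_unit_eq_one:
  assumes "g \<in> mor G" "u \<in> Sg g" "\<forall>v\<in>Sg g. v * u = v"
  shows "u = one g"
  using assms one_mult_Sg[of g u] one_in_Sg[of g] by force

lemma one_eq_if_Sg_eq: "k \<in> mor G \<Longrightarrow> l \<in> mor G \<Longrightarrow> Sg k = Sg l \<Longrightarrow> one k = one l"
  using right_unit_eq_one[of l "one k"] mult_one_Sg[of k] one_in_Sg[of k] by simp

lemma Sg_tgt_ideal: "g \<in> mor G \<Longrightarrow> is_ideal (Sg (tgt G g)) UNIV"
  using partial_action unfolding partial_action_def by blast

lemma Sg_ideal: "g \<in> mor G \<Longrightarrow> is_ideal (Sg g) (Sg (tgt G g))"
  using partial_action unfolding partial_action_def by blast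

lemma al_ring_iso: "g \<in> mor G \<Longrightarrow> ring_iso (al g) (Sg (ginv G g)) (Sg g)"
  using partial_action unfolding partial_action_def by blast

lemma al_obj: "x \<in> objs G \<Longrightarrow> a \<in> Sg x \<Longrightarrow> al x a = a"
  using partial_action unfolding partial_action_def by blast

lemma al_comp:
  assumes "g \<in> mor G" "h \<in> mor G" "src G g = tgt G h" "a \<in> Sg (ginv G h)"
    and "al h a \<in> Sg (ginv G g)" "al h a \<in> Sg h"
  shows "a \<in> Sg (ginv G (comp G g h))" and "al g (al h a) = al (comp G g h) a"
  using partial_action assms unfolding partial_action_def by blast+

lemma Sg_obj_mult: "x \<in> objs G \<Longrightarrow> a \<in> Sg x \<Longrightarrow> r * a \<in> Sg x \<and> a * r \<in> Sg x"
  using Sg_tgt_ideal[OF objs_in_mor] unfolding is_ideal_def by force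

lemma zero_in_Sg_obj: "x \<in> objs G \<Longrightarrow> 0 \<in> Sg x"
  using Sg_tgt_ideal[OF objs_in_mor] unfolding is_ideal_def by force

lemma Sg_subset_tgt: "g \<in> mor G \<Longrightarrow> Sg g \<subseteq> Sg (tgt G g)"
  using Sg_ideal unfolding is_ideal_def by blast

lemma Sg_ginv_subset_src: "g \<in> mor G \<Longrightarrow> Sg (ginv G g) \<subseteq> Sg (src G g)"
  using Sg_subset_tgt[of "ginv G g"] by simp

lemma one_tgt_mult: "g \<in> mor G \<Longrightarrow> one (tgt G g) * one g = one g"
  using Sg_subset_tgt[of g] one_in_Sg[of g] by (intro one_mult_Sg) auto

lemma one_src_mult: "g \<in> mor G \<Longrightarrow> one (src G g) * one (ginv G g) = one (ginv G g)"
  using one_tgt_mult[of "ginv G g"] by simp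

lemma al_image: "g \<in> mor G \<Longrightarrow> al g ` Sg (ginv G g) = Sg g"
  using al_ring_iso[of g] by (simp add: ring_iso_def bij_betw_def)

lemma al_in_Sg: "g \<in> mor G \<Longrightarrow> a \<in> Sg (ginv G g) \<Longrightarrow> al g a \<in> Sg g"
  using al_image by blast

lemma al_mult: "g \<in> mor G \<Longrightarrow> a \<in> Sg (ginv G g) \<Longrightarrow> b \<in> Sg (ginv G g) \<Longrightarrow> al g (a * b) = al g a * al g b"
  using al_ring_iso[of g] by (simp add: ring_iso_def)

lemma al_zero: "g \<in> mor G \<Longrightarrow> al g 0 = 0"
proof -
  assume g: "g \<in> mor G"
  have "0 \<in> Sg (ginv G g)"
    using Sg_ideal[of "ginv G g"] g unfolding is_ideal_def by simp
  then have "al g (0 + 0) = al g 0 + al g 0"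
    using al_ring_iso[OF g] unfolding ring_iso_def by blast
  then show ?thesis by simp
qed

lemma al_ginv_al:
  assumes "k \<in> mor G" "x \<in> Sg (ginv G k)"
  shows "al (ginv G k) (al k x) = x"
proof -
  have "al (ginv G k) (al k x) = al (comp G (ginv G k) k) x"
    using assms al_in_Sg[OF assms] by (intro al_comp(2)) auto
  also have "\<dots> = x"
    using assms Sg_ginv_subset_src[of k] by (auto intro: al_obj)
  finally show ?thesis .
qed

lemma al_one:
  assumes "h \<in> mor G"
  shows "al h (one (ginv G h)) = one h"
proof (rule right_unit_eq_one)
  show "\<forall>v\<in>Sg h. v * al h (one (ginv G h)) = v"
  proof
    fix v assume "v \<in> Sg h"
    then obtain a where "a \<in> Sg (ginv G h)" "v = al h a"
      using al_image[OF assms] by blast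
    then show "v * al h (one (ginv G h)) = v"
      using assms by (simp add: al_mult[symmetric] mult_one_Sg)
  qed
qed (use assms al_in_Sg in auto)

definition carries :: "'g \<Rightarrow> 'a \<Rightarrow> 'a \<Rightarrow> bool" where
  "carries g a b \<longleftrightarrow> al g (a * one (ginv G g)) = b * one g"

lemma mem_fixed_ring_iff: "a \<in> fixed_ring G al one K A \<longleftrightarrow> a \<in> A \<and> (\<forall>k\<in>K. carries k a a)"
  unfolding fixed_ring_def carries_def by blast

lemma mem_stab_iff: "k \<in> stab G al one K B \<longleftrightarrow> k \<in> K \<and> (\<forall>b\<in>B. carries k b b)"
  unfolding stab_def carries_def by blast

lemma carries_restrict:
  "g \<in> mor G \<Longrightarrow> carries g (a * one (src G g)) (b * one (tgt G g)) \<longleftrightarrow> carries g a b"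
  by (simp add: carries_def mult.assoc one_src_mult one_tgt_mult)

lemma carries_ginv:
  assumes "g \<in> mor G" "carries g a b"
  shows "carries (ginv G g) b a"
  using assms al_ginv_al[of g "a * one (ginv G g)"] by (simp add: carries_def)

lemma carries_ginv_iff: "g \<in> mor G \<Longrightarrow> carries (ginv G g) b a \<longleftrightarrow> carries g a b"
  using carries_ginv[of g a b] carries_ginv[of "ginv G g" b a] by auto

lemma carries_obj: "x \<in> objs G \<Longrightarrow> carries x a a"
  unfolding carries_def by (simp add: al_obj objs_in_mor)

lemma carries_zero: "g \<in> mor G \<Longrightarrow> carries g 0 0"
  unfolding carries_def by (simp add: al_zero)

definition full_mor :: "'g \<Rightarrow> bool" where
  "full_mor g \<longleftrightarrow> Sg (ginv G g) = Sg (src G g) \<and> Sg g = Sg (tgt G g)"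

lemma full_mor_ginv: "g \<in> mor G \<Longrightarrow> full_mor g \<Longrightarrow> full_mor (ginv G g)"
  unfolding full_mor_def by simp

lemma one_ginv_full: "s \<in> mor G \<Longrightarrow> full_mor s \<Longrightarrow> one (ginv G s) = one (src G s)"
  unfolding full_mor_def by (intro one_eq_if_Sg_eq) auto

lemma one_full: "s \<in> mor G \<Longrightarrow> full_mor s \<Longrightarrow> one s = one (tgt G s)"
  unfolding full_mor_def by (intro one_eq_if_Sg_eq) auto

lemma al_full_in_Sg: "s \<in> mor G \<Longrightarrow> full_mor s \<Longrightarrow> a \<in> Sg (src G s) \<Longrightarrow> al s a \<in> Sg (tgt G s)"
  unfolding full_mor_def using al_in_Sg[of s a] by simp

lemma al_ginv_al_full: "s \<in> mor G \<Longrightarrow> full_mor s \<Longrightarrow> c \<in> Sg (tgt G s) \<Longrightarrow> al s (al (ginv G s) c) = c"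
  unfolding full_mor_def using al_ginv_al[of "ginv G s" c] by simp

context
  fixes s g :: 'g
  assumes s: "s \<in> mor G" "full_mor s" and g: "g \<in> mor G" "src G g = tgt G s"
begin

lemma Sg_ginv_comp_full_iff:
  "a \<in> Sg (ginv G (comp G g s)) \<longleftrightarrow> a \<in> Sg (src G s) \<and> al s a \<in> Sg (ginv G g)"
proof
  assume a: "a \<in> Sg (ginv G (comp G g s))"
  then have a_src: "a \<in> Sg (src G s)"
    using Sg_ginv_subset_src[of "comp G g s"] s g by auto
  have "al s a \<in> Sg (ginv G (comp G (comp G g s) (ginv G s)))"
  proof (rule al_comp(1))
    show "al (ginv G s) (al s a) \<in> Sg (ginv G (comp G g s))"
      using a a_src s al_ginv_al[of s a] unfolding full_mor_def by simp
    show "al (ginv G s) (al s a) \<in> Sg (ginv G s)"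
      using a_src s al_ginv_al[of s a] unfolding full_mor_def by simp
    show "al s a \<in> Sg (ginv G (ginv G s))"
      using a_src s al_full_in_Sg[of s a] unfolding full_mor_def by simp
  qed (use s g in auto)
  then show "a \<in> Sg (src G s) \<and> al s a \<in> Sg (ginv G g)"
    using a_src s g comp_src[of g] by simp
next
  assume "a \<in> Sg (src G s) \<and> al s a \<in> Sg (ginv G g)"
  then show "a \<in> Sg (ginv G (comp G g s))"
    using s g al_full_in_Sg[of s a] unfolding full_mor_def by (intro al_comp(1)) auto
qed

lemma al_comp_full:
  "a \<in> Sg (ginv G (comp G g s)) \<Longrightarrow> al (comp G g s) a = al g (al s a)"
  using Sg_ginv_comp_full_iff s g al_full_in_Sg[of s a] unfolding full_mor_def
  by (intro al_comp(2)[symmetric]) auto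

lemma al_image_Sg_ginv_comp_full: "al s ` Sg (ginv G (comp G g s)) = Sg (ginv G g)"
proof
  show "al s ` Sg (ginv G (comp G g s)) \<subseteq> Sg (ginv G g)"
    using Sg_ginv_comp_full_iff by blast
  show "Sg (ginv G g) \<subseteq> al s ` Sg (ginv G (comp G g s))"
  proof
    fix c assume c: "c \<in> Sg (ginv G g)"
    then have "c \<in> Sg (tgt G s)"
      using Sg_ginv_subset_src[of g] g by auto
    then have "al (ginv G s) c \<in> Sg (src G s)" "al s (al (ginv G s) c) = c"
      using s al_full_in_Sg[of "ginv G s" c] full_mor_ginv al_ginv_al_full by auto
    then show "c \<in> al s ` Sg (ginv G (comp G g s))"
      using c Sg_ginv_comp_full_iff by (metis image_eqI)
  qed
qed

lemma Sg_comp_full: "Sg (comp G g s) = Sg g"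
proof -
  have "Sg (comp G g s) = al (comp G g s) ` Sg (ginv G (comp G g s))"
    using s g by (simp add: al_image)
  also have "\<dots> = al g ` al s ` Sg (ginv G (comp G g s))"
    using al_comp_full by (simp add: image_image cong: image_cong)
  also have "\<dots> = Sg g"
    using g by (simp add: al_image_Sg_ginv_comp_full al_image)
  finally show ?thesis .
qed

lemma al_one_ginv_comp_full: "al s (one (ginv G (comp G g s))) = one (ginv G g)"
proof (rule right_unit_eq_one)
  let ?u = "one (ginv G (comp G g s))"
  have u: "?u \<in> Sg (ginv G (comp G g s))"
    using s g by simp
  then show "al s ?u \<in> Sg (ginv G g)"
    using Sg_ginv_comp_full_iff by blast
  show "\<forall>v\<in>Sg (ginv G g). v * al s ?u = v"
  proof
    fix v assume "v \<in> Sg (ginv G g)"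
    then obtain a where a: "a \<in> Sg (ginv G (comp G g s))" "v = al s a"
      using al_image_Sg_ginv_comp_full by blast
    have "a \<in> Sg (ginv G s)" "?u \<in> Sg (ginv G s)"
      using a(1) u Sg_ginv_comp_full_iff s unfolding full_mor_def by auto
    then have "v * al s ?u = al s (a * ?u)"
      using a(2) s by (simp add: al_mult)
    then show "v * al s ?u = v"
      using a s g by (simp add: mult_one_Sg)
  qed
qed (use g in simp)

lemma carries_comp_full_right:
  assumes "a \<in> Sg (src G s)"
  shows "carries (comp G g s) a b \<longleftrightarrow> carries g (al s a) b"
proof -
  let ?k = "comp G g s"
  have u: "one (ginv G ?k) \<in> Sg (src G s)"
    using Sg_ginv_comp_full_iff[of "one (ginv G ?k)"] s g by simp
  have "al ?k (a * one (ginv G ?k)) = al g (al s (a * one (ginv G ?k)))"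
    using s g by (intro al_comp_full) simp
  also have "al s (a * one (ginv G ?k)) = al s a * one (ginv G g)"
    using assms u s al_mult[of s a] al_one_ginv_comp_full unfolding full_mor_def by simp
  finally have "al ?k (a * one (ginv G ?k)) = al g (al s a * one (ginv G g))" .
  moreover have "one ?k = one g"
    using s g Sg_comp_full by (intro one_eq_if_Sg_eq) auto
  ultimately show ?thesis
    unfolding carries_def by simp
qed

end

lemma carries_comp_full_left:
  assumes "s \<in> mor G" "full_mor s" "g \<in> mor G" "tgt G g = src G s" "b \<in> Sg (tgt G s)"
  shows "carries (comp G s g) a b \<longleftrightarrow> carries g a (al (ginv G s) b)"
proof -
  have "carries (comp G s g) a b \<longleftrightarrow> carries (comp G (ginv G g) (ginv G s)) b a"
    using assms carries_ginv_iff[of "comp G s g" b a] by (simp add: ginv_comp)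
  also have "\<dots> \<longleftrightarrow> carries (ginv G g) (al (ginv G s) b) a"
    using assms full_mor_ginv by (intro carries_comp_full_right) auto
  also have "\<dots> \<longleftrightarrow> carries g a (al (ginv G s) b)"
    using assms by (simp add: carries_ginv_iff)
  finally show ?thesis .
qed

lemma carries_conj_full:
  assumes "a \<in> mor G" "full_mor a" "b \<in> mor G" "full_mor b" "g \<in> mor G"
    and "tgt G a = src G g" "tgt G b = tgt G g" "x \<in> Sg (src G a)" "y \<in> Sg (src G b)"
  shows "carries (comp G (ginv G b) (comp G g a)) x y \<longleftrightarrow> carries g (al a x) (al b y)"
proof -
  have "carries (comp G (ginv G b) (comp G g a)) x y \<longleftrightarrow> carries (comp G g a) x (al b y)"
    using assms full_mor_ginv[of b] by (subst carries_comp_full_left) auto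
  also have "\<dots> \<longleftrightarrow> carries g (al a x) (al b y)"
    using assms by (intro carries_comp_full_right) auto
  finally show ?thesis .
qed

end

locale direct_sum_action = unital_partial_action +
  assumes finite_objs: "finite (objs G)"
    and direct_sum: "internal_direct_sum (objs G) Sg"
begin

lemma Sg_orthogonal:
  assumes "y \<in> objs G" "z \<in> objs G" "y \<noteq> z" "a \<in> Sg y" "b \<in> Sg z"
  shows "a * b = 0"
proof -
  let ?c = "a * b"
  let ?P = "\<lambda>f. (\<forall>w. w \<notin> objs G \<longrightarrow> f w = 0) \<and> (\<forall>w\<in>objs G. f w \<in> Sg w) \<and> ?c = (\<Sum>w\<in>objs G. f w)"
  have "\<exists>!f. ?P f"
    using direct_sum unfolding internal_direct_sum_def by (rule spec)
  then have "Uniq ?P"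
    by (simp add: ex1_iff_ex_Uniq)
  moreover have "?P (\<lambda>w. if w = y then ?c else 0)" "?P (\<lambda>w. if w = z then ?c else 0)"
    using assms Sg_obj_mult zero_in_Sg_obj finite_objs by auto
  ultimately have "(\<lambda>w. if w = y then ?c else 0) = (\<lambda>w. if w = z then ?c else 0)"
    by (rule Uniq_D[where P = ?P])
  then show ?thesis
    using assms(3) fun_cong[of _ _ y] by fastforce
qed

lemma sum_mult_one:
  assumes "Y \<subseteq> objs G" "w \<in> objs G" "\<forall>y\<in>Y. f y \<in> Sg y"
  shows "(\<Sum>y\<in>Y. f y) * one w = (if w \<in> Y then f w else 0)"
proof -
  have "(\<Sum>y\<in>Y. f y) * one w = (\<Sum>y\<in>Y. if y = w then f w else 0)"
    unfolding sum_distrib_right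
  proof (rule sum.cong)
    fix y assume y: "y \<in> Y"
    have "y \<in> objs G" "f y \<in> Sg y" "w \<in> mor G"
      using y assms objs_in_mor by auto
    then show "f y * one w = (if y = w then f w else 0)"
      using assms(2) Sg_orthogonal[of y w "f y" "one w"] mult_one_Sg[of w "f w"] by auto
  qed simp
  also have "\<dots> = (if w \<in> Y then f w else 0)"
    using finite_subset[OF assms(1) finite_objs] by simp
  finally show ?thesis .
qed

lemma carries_indicator_iff:
  assumes "Y \<subseteq> objs G" "g \<in> mor G" "one g \<noteq> 0"
  shows "carries g (\<Sum>y\<in>Y. one y) (\<Sum>y\<in>Y. one y) \<longleftrightarrow> (src G g \<in> Y \<longleftrightarrow> tgt G g \<in> Y)"
proof -
  let ?e = "\<Sum>y\<in>Y. one y"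
  have e: "?e * one w = (if w \<in> Y then one w else 0)" if "w \<in> objs G" for w
    using sum_mult_one[of Y w one] assms(1) that objs_in_mor by (auto simp: subset_iff)
  have "carries g ?e ?e \<longleftrightarrow> carries g (?e * one (src G g)) (?e * one (tgt G g))"
    using assms(2) by (simp add: carries_restrict)
  also have "\<dots> \<longleftrightarrow> (if src G g \<in> Y then one g else 0) = (if tgt G g \<in> Y then one g else 0)"
    using assms(2) by (simp add: e carries_def one_src_mult one_tgt_mult al_one al_zero)
  also have "\<dots> \<longleftrightarrow> (src G g \<in> Y \<longleftrightarrow> tgt G g \<in> Y)"
    using assms(3) by auto
  finally show ?thesis .
qed

end

section \<open>The stabiliser of the ring of invariants\<close>

locale wSub_action = direct_sum_action G Sg al one + wide_subgroupoid G H
  for G :: "('g, 'b) groupoid_scheme" and Sg :: "'g \<Rightarrow> 'a::ring set" and al one H +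
  assumes group_type: "group_type G H Sg"
    and one_nonzero: "\<forall>g\<in>mor G. one g \<noteq> 0"
begin

abbreviation T :: "'a set" where
  "T \<equiv> fixed_ring G al one H UNIV"

abbreviation G_T :: "'g set" where
  "G_T \<equiv> stab G al one (mor G) T"

abbreviation T_at :: "'g \<Rightarrow> 'a set" where
  "T_at r \<equiv> fixed_ring G al one (loc_group G H r) (Sg r)"

lemma obtain_full_mor_in_H:
  assumes "Y \<in> components G H" "r \<in> Y" "y \<in> Y"
  obtains s where "s \<in> H" "src G s = r" "tgt G s = y" "full_mor s"
proof -
  obtain x \<tau> where \<tau>: "\<forall>z\<in>Y. \<tau> z \<in> H \<and> src G (\<tau> z) = x \<and> tgt G (\<tau> z) = z \<and>
      Sg (ginv G (\<tau> z)) = Sg x \<and> Sg (\<tau> z) = Sg z"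
  proof -
    have "group_type_on G H Sg Y"
      using group_type assms(1) unfolding group_type_def by blast
    then show ?thesis
      using that unfolding group_type_on_def by blast
  qed
  have \<tau>_mor: "\<tau> z \<in> mor G" and \<tau>_full: "full_mor (\<tau> z)" if "z \<in> Y" for z
    using \<tau> that H_in_mor unfolding full_mor_def by auto
  let ?s = "comp G (\<tau> y) (ginv G (\<tau> r))"
  have "Sg ?s = Sg (\<tau> y)"
    using assms \<tau> \<tau>_mor \<tau>_full full_mor_ginv by (intro Sg_comp_full) auto
  moreover have "Sg (ginv G ?s) = Sg (\<tau> r)"
  proof -
    have "ginv G ?s = comp G (\<tau> r) (ginv G (\<tau> y))"
      using assms \<tau> \<tau>_mor by (simp add: ginv_comp)
    then show ?thesis
      using assms \<tau> \<tau>_mor \<tau>_full full_mor_ginv by (simp add: Sg_comp_full)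
  qed
  ultimately have "full_mor ?s"
    using assms \<tau> \<tau>_mor unfolding full_mor_def by simp
  moreover have "?s \<in> H" "src G ?s = r" "tgt G ?s = y"
    using assms \<tau> \<tau>_mor by (auto simp: comp_in_H ginv_in_H)
  ultimately show ?thesis
    using that by blast
qed

lemma mem_T_iff: "t \<in> T \<longleftrightarrow> (\<forall>h\<in>H. carries h t t)"
  by (simp add: mem_fixed_ring_iff)

lemma mem_G_T_iff: "g \<in> G_T \<longleftrightarrow> g \<in> mor G \<and> (\<forall>t\<in>T. carries g t t)"
  by (rule mem_stab_iff)

lemma al_full_T:
  assumes "t \<in> T" "s \<in> H" "full_mor s"
  shows "al s (t * one (src G s)) = t * one (tgt G s)"
  using assms H_in_mor[of s] one_ginv_full[of s] one_full[of s]
  unfolding mem_T_iff carries_def by auto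

lemma objs_subset_G_T: "objs G \<subseteq> G_T"
  by (auto simp: mem_G_T_iff carries_obj objs_in_mor)

lemma ginv_in_G_T: "g \<in> G_T \<Longrightarrow> ginv G g \<in> G_T"
  by (simp add: mem_G_T_iff carries_ginv)

lemma H_subset_G_T: "H \<subseteq> G_T"
  by (auto simp: mem_G_T_iff mem_T_iff H_in_mor)

lemma conj_in_loc_group_G_T_iff:
  assumes "a \<in> H" "full_mor a" "b \<in> H" "full_mor b" "src G a = r" "src G b = r"
    and "g \<in> mor G" "tgt G a = src G g" "tgt G b = tgt G g"
  shows "comp G (ginv G b) (comp G g a) \<in> loc_group G G_T r \<longleftrightarrow> g \<in> G_T"
proof -
  let ?k = "comp G (ginv G b) (comp G g a)"
  have ab: "a \<in> mor G" "b \<in> mor G"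
    using assms H_in_mor by auto
  then have k: "?k \<in> mor G" "src G ?k = src G a" "tgt G ?k = src G b"
    using assms by auto
  have "carries ?k t t \<longleftrightarrow> carries g t t" if "t \<in> T" for t
  proof -
    have "carries ?k t t \<longleftrightarrow> carries ?k (t * one (src G a)) (t * one (src G b))"
      using carries_restrict[OF k(1)] k by simp
    also have "\<dots> \<longleftrightarrow> carries g (al a (t * one (src G a))) (al b (t * one (src G b)))"
      using assms ab by (intro carries_conj_full) auto
    also have "\<dots> \<longleftrightarrow> carries g t t"
      using assms ab al_full_T[OF that assms(1,2)] al_full_T[OF that assms(3,4)]
      by (simp add: carries_restrict)
    finally show ?thesis .
  qed
  then show ?thesis
    using assms ab unfolding loc_group_def mem_G_T_iff by auto
qed

lemma G_T_component_src_iff_tgt: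
  assumes "g \<in> G_T" "Y \<in> components G H"
  shows "src G g \<in> Y \<longleftrightarrow> tgt G g \<in> Y"
proof -
  have indicator_T: "(\<Sum>y\<in>Y. one y) \<in> T"
    using assms(2) components_subset_objs one_nonzero H_in_mor
    by (auto simp: mem_T_iff carries_indicator_iff component_src_iff_tgt)
  show ?thesis
    using assms indicator_T components_subset_objs one_nonzero
    by (auto simp: mem_G_T_iff carries_indicator_iff[symmetric])
qed

lemma G_T_component:
  assumes "g \<in> G_T"
  obtains Y where "Y \<in> components G H" "src G g \<in> Y" "tgt G g \<in> Y"
proof -
  have "g \<in> mor G"
    using assms by (simp add: mem_G_T_iff)
  then obtain Y where "Y \<in> components G H" "src G g \<in> Y"
    using ex_component[of "src G g"] by auto
  then show ?thesis
    using that G_T_component_src_iff_tgt[OF assms] by blast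
qed

lemma carries_transport:
  assumes "b \<in> T_at r" "h \<in> H"
    and "a \<in> H" "full_mor a" "src G a = r" "tgt G a = src G h"
    and "c \<in> H" "full_mor c" "src G c = r" "tgt G c = tgt G h"
  shows "carries h (al a b) (al c b)"
proof -
  have mor: "a \<in> mor G" "c \<in> mor G" "h \<in> mor G"
    using assms H_in_mor by auto
  have "comp G (ginv G c) (comp G h a) \<in> loc_group G H r"
    using assms mor by (auto simp: loc_group_def comp_in_H ginv_in_H)
  then have "carries (comp G (ginv G c) (comp G h a)) b b"
    using assms(1) by (simp add: mem_fixed_ring_iff)
  then show ?thesis
    using assms mor mem_fixed_ring_iff[of b] by (subst carries_conj_full[symmetric]) auto
qed

context
  fixes Y r b \<sigma>
  assumes Y: "Y \<in> components G H" and b: "b \<in> T_at r"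
    and \<sigma>: "\<And>y. y \<in> Y \<Longrightarrow> \<sigma> y \<in> H \<and> src G (\<sigma> y) = r \<and> tgt G (\<sigma> y) = y \<and> full_mor (\<sigma> y)"
begin

lemma transport_sum_mult_one:
  assumes "w \<in> objs G"
  shows "(\<Sum>y\<in>Y. al (\<sigma> y) b) * one w = (if w \<in> Y then al (\<sigma> w) b else 0)"
proof (rule sum_mult_one)
  show "\<forall>y\<in>Y. al (\<sigma> y) b \<in> Sg y"
  proof
    fix y assume "y \<in> Y"
    then show "al (\<sigma> y) b \<in> Sg y"
      using \<sigma>[of y] b H_in_mor[of "\<sigma> y"] al_full_in_Sg[of "\<sigma> y" b] by (simp add: mem_fixed_ring_iff)
  qed
qed (use Y assms components_subset_objs in auto)

lemma transport_sum_in_T: "(\<Sum>y\<in>Y. al (\<sigma> y) b) \<in> T"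
  unfolding mem_T_iff
proof
  fix h assume h: "h \<in> H"
  let ?t = "\<Sum>y\<in>Y. al (\<sigma> y) b"
  have hm: "h \<in> mor G"
    using H_in_mor h by blast
  show "carries h ?t ?t"
  proof (cases "src G h \<in> Y")
    case False
    then have "tgt G h \<notin> Y"
      using component_src_iff_tgt[OF Y h] by simp
    then show ?thesis
      using False carries_restrict[OF hm, of ?t ?t] transport_sum_mult_one carries_zero hm by simp
  next
    case True
    then have "tgt G h \<in> Y"
      using component_src_iff_tgt[OF Y h] by simp
    then have "carries h (al (\<sigma> (src G h)) b) (al (\<sigma> (tgt G h)) b)"
      using True \<sigma> b h by (intro carries_transport) auto
    then show ?thesis
      using carries_restrict[OF hm, of ?t ?t] transport_sum_mult_one True \<open>tgt G h \<in> Y\<close> hm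
      by simp
  qed
qed

end

lemma T_at_extends:
  assumes "r \<in> objs G" "b \<in> T_at r"
  obtains t where "t \<in> T" "t * one r = b"
proof -
  obtain Y where Y: "Y \<in> components G H" "r \<in> Y"
    using ex_component assms(1) by blast
  have "\<forall>y\<in>Y. \<exists>s. s \<in> H \<and> src G s = r \<and> tgt G s = y \<and> full_mor s"
    using obtain_full_mor_in_H[OF Y] by blast
  then obtain \<sigma> where \<sigma>: "\<And>y. y \<in> Y \<Longrightarrow> \<sigma> y \<in> H \<and> src G (\<sigma> y) = r \<and> tgt G (\<sigma> y) = y \<and> full_mor (\<sigma> y)"
    by metis
  have "carries (\<sigma> r) b b"
    using assms(2) \<sigma>[OF Y(2)] by (simp add: mem_fixed_ring_iff loc_group_def)
  then have "al (\<sigma> r) b = b"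
    using \<sigma>[OF Y(2)] H_in_mor assms mem_fixed_ring_iff[of b]
    by (simp add: carries_def one_ginv_full one_full mult_one_Sg objs_in_mor)
  then show ?thesis
    using that transport_sum_in_T[OF Y(1) assms(2) \<sigma>] transport_sum_mult_one[OF Y(1) assms(2) \<sigma> assms(1)] Y(2)
    by simp
qed

lemma stab_T_at_eq:
  assumes "r \<in> objs G"
  shows "stab G al one (loc_group G (mor G) r) (T_at r) = loc_group G G_T r"
proof (intro set_eqI iffI)
  fix l
  assume "l \<in> stab G al one (loc_group G (mor G) r) (T_at r)"
  then have l: "l \<in> mor G" "src G l = r" "tgt G l = r" and l_T_at: "\<forall>b\<in>T_at r. carries l b b"
    by (auto simp: mem_stab_iff loc_group_def)
  have "t * one r \<in> T_at r" if t: "t \<in> T" for t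
  proof -
    have "carries k (t * one r) (t * one r)" if "k \<in> loc_group G H r" for k
    proof -
      from that have k: "k \<in> H" "src G k = r" "tgt G k = r"
        by (simp_all add: loc_group_def)
      then show ?thesis
        using t carries_restrict[of k t t] H_in_mor[of k] by (simp add: mem_T_iff)
    qed
    then show ?thesis
      using assms objs_in_mor by (simp add: mem_fixed_ring_iff)
  qed
  then have "carries l t t" if "t \<in> T" for t
    using that l_T_at carries_restrict[OF l(1), of t t] l by simp
  then show "l \<in> loc_group G G_T r"
    using l by (simp add: loc_group_def mem_G_T_iff)
next
  fix l
  assume "l \<in> loc_group G G_T r"
  then have l: "l \<in> mor G" "src G l = r" "tgt G l = r" and l_T: "\<forall>t\<in>T. carries l t t"
    by (auto simp: mem_G_T_iff loc_group_def)
  have "carries l b b" if b: "b \<in> T_at r" for b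
  proof -
    obtain t where "t \<in> T" "t * one r = b"
      using T_at_extends[OF assms b] .
    then show ?thesis
      using l_T carries_restrict[OF l(1), of t t] l by auto
  qed
  then show "l \<in> stab G al one (loc_group G (mor G) r) (T_at r)"
    using l by (simp add: mem_stab_iff loc_group_def)
qed

lemma G_T_wide_subgroupoid_iff:
  assumes rep: "\<forall>Y\<in>components G H. rep Y \<in> Y"
  shows "subgroupoid G G_T \<and> wide G G_T \<longleftrightarrow>
    (\<forall>Y\<in>components G H. subgroup_at G (rep Y) (loc_group G G_T (rep Y)))"
proof
  assume "subgroupoid G G_T \<and> wide G G_T"
  then show "\<forall>Y\<in>components G H. subgroup_at G (rep Y) (loc_group G G_T (rep Y))"
    using rep components_subset_objs by (auto simp: wide_def intro!: subgroup_at_loc_group)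
next
  assume loops: "\<forall>Y\<in>components G H. subgroup_at G (rep Y) (loc_group G G_T (rep Y))"
  have "comp G f g \<in> G_T" if fg: "f \<in> G_T" "g \<in> G_T" "src G f = tgt G g" for f g
  proof -
    have mor: "f \<in> mor G" "g \<in> mor G"
      using fg by (auto simp: mem_G_T_iff)
    obtain Y where Y: "Y \<in> components G H" "src G g \<in> Y" "tgt G g \<in> Y"
      using G_T_component[OF fg(2)] .
    then have "tgt G f \<in> Y"
      using G_T_component_src_iff_tgt[OF fg(1) Y(1)] fg(3) by simp
    have r: "rep Y \<in> Y"
      using rep Y(1) by blast
    obtain a where a: "a \<in> H" "src G a = rep Y" "tgt G a = src G g" "full_mor a"
      using obtain_full_mor_in_H[OF Y(1) r Y(2)] .
    obtain b where b: "b \<in> H" "src G b = rep Y" "tgt G b = tgt G g" "full_mor b"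
      using obtain_full_mor_in_H[OF Y(1) r Y(3)] .
    obtain c where c: "c \<in> H" "src G c = rep Y" "tgt G c = tgt G f" "full_mor c"
      using obtain_full_mor_in_H[OF Y(1) r \<open>tgt G f \<in> Y\<close>] .
    have abc: "a \<in> mor G" "b \<in> mor G" "c \<in> mor G"
      using a b c H_in_mor by auto
    have "comp G (ginv G c) (comp G f b) \<in> loc_group G G_T (rep Y)"
         "comp G (ginv G b) (comp G g a) \<in> loc_group G G_T (rep Y)"
      using a b c fg mor by (simp_all add: conj_in_loc_group_G_T_iff)
    then have "comp G (comp G (ginv G c) (comp G f b)) (comp G (ginv G b) (comp G g a))
        \<in> loc_group G G_T (rep Y)"
      using loops Y(1) unfolding subgroup_at_def by blast
    then have "comp G (ginv G c) (comp G (comp G f g) a) \<in> loc_group G G_T (rep Y)"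
      using a b c abc fg mor by (simp add: conj_comp)
    then show ?thesis
      using a c fg mor by (simp add: conj_in_loc_group_G_T_iff)
  qed
  moreover have "g \<in> mor G" if "g \<in> G_T" for g
    using that by (simp add: mem_G_T_iff)
  moreover have "src G g \<in> G_T" "tgt G g \<in> G_T" if "g \<in> mor G" for g
    using that subsetD[OF objs_subset_G_T] by simp_all
  ultimately show "subgroupoid G G_T \<and> wide G G_T"
    unfolding subgroupoid_def wide_def using objs_subset_G_T ginv_in_G_T by (simp add: subset_iff)
qed

lemma G_T_eq_H_iff:
  assumes rep: "\<forall>Y\<in>components G H. rep Y \<in> Y"
  shows "G_T = H \<longleftrightarrow> (\<forall>Y\<in>components G H. loc_group G G_T (rep Y) = loc_group G H (rep Y))"
proof
  assume loops: "\<forall>Y\<in>components G H. loc_group G G_T (rep Y) = loc_group G H (rep Y)"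
  have "g \<in> H" if g: "g \<in> G_T" for g
  proof -
    have mor: "g \<in> mor G"
      using g by (simp add: mem_G_T_iff)
    obtain Y where Y: "Y \<in> components G H" "src G g \<in> Y" "tgt G g \<in> Y"
      using G_T_component[OF g] .
    have r: "rep Y \<in> Y"
      using rep Y(1) by blast
    obtain a where a: "a \<in> H" "src G a = rep Y" "tgt G a = src G g" "full_mor a"
      using obtain_full_mor_in_H[OF Y(1) r Y(2)] .
    obtain b where b: "b \<in> H" "src G b = rep Y" "tgt G b = tgt G g" "full_mor b"
      using obtain_full_mor_in_H[OF Y(1) r Y(3)] .
    have ab: "a \<in> mor G" "b \<in> mor G"
      using a b H_in_mor by auto
    define k where "k = comp G (ginv G b) (comp G g a)"
    have "k \<in> loc_group G H (rep Y)"
      unfolding k_def using a b g mor loops Y(1) by (simp add: conj_in_loc_group_G_T_iff[symmetric])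
    then have k: "k \<in> H" "src G k = rep Y" "tgt G k = rep Y"
      by (simp_all add: loc_group_def)
    have "comp G b (comp G k (ginv G a)) \<in> H"
      using k a b ab H_in_mor[OF k(1)] by (intro comp_in_H ginv_in_H) simp_all
    moreover have "comp G b (comp G k (ginv G a)) = g"
      unfolding k_def using a b ab mor by (intro conj_cancel) auto
    ultimately show ?thesis
      by simp
  qed
  then show "G_T = H"
    using H_subset_G_T by blast
qed simp

end

theorem proposition4p3:
  fixes G :: "'g groupoid"
    and Sg :: "'g \<Rightarrow> 'a::ring set"
    and al :: "'g \<Rightarrow> 'a \<Rightarrow> 'a"
    and one :: "'g \<Rightarrow> 'a"
    and H :: "'g set"
    and rep :: "'g set \<Rightarrow> 'g"
  assumes "is_groupoid G" and "finite (mor G)" and "connected_groupoid G"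
    and "partial_action G Sg al" and "unital_pa G Sg one"
    and "group_type G (mor G) Sg"
    and "internal_direct_sum (objs G) Sg"
    and "\<forall>g\<in>mor G. one g \<noteq> 0"
    and "H \<in> wSub G Sg"
    and "\<forall>Y\<in>components G H. rep Y \<in> Y"
  defines "T \<equiv> fixed_ring G al one H UNIV"
  shows "(subgroupoid G (stab G al one (mor G) T) \<and> wide G (stab G al one (mor G) T)
           \<longleftrightarrow> (\<forall>Y\<in>components G H.
                 subgroup_at G (rep Y)
                   (stab G al one (loc_group G (mor G) (rep Y))
                      (fixed_ring G al one (loc_group G H (rep Y)) (Sg (rep Y))))))
       \<and> (stab G al one (mor G) T = H
           \<longleftrightarrow> (\<forall>Y\<in>components G H.
                 stab G al one (loc_group G (mor G) (rep Y))
                   (fixed_ring G al one (loc_group G H (rep Y)) (Sg (rep Y)))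
                 = loc_group G H (rep Y)))"
proof -
  interpret wSub_action G Sg al one H
    by unfold_locales (use assms in \<open>auto simp: wSub_def objs_def\<close>)
  have "stab G al one (loc_group G (mor G) (rep Y)) (T_at (rep Y)) = loc_group G G_T (rep Y)"
    if "Y \<in> components G H" for Y
    using that assms(10) components_subset_objs by (intro stab_T_at_eq) blast
  then show ?thesis
    using G_T_wide_subgroupoid_iff[OF assms(10)] G_T_eq_H_iff[OF assms(10)]
    unfolding T_def by simp
qed

end
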